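(* Let $2\le p\le n$, $\beta_1\neq0$, $z_1,\dots,z_p\in\mathbb R$, and for $\lambda\ge0$ let $$L_p(\lambda)=\frac1n\Big(\beta_1-\operatorname{sgn}(z_1)(|z_1|-\lambda)_+\Big)^2+\frac1n\sum_{j=2}^p\big((|z_j|-\lambda)_+\big)^2,\quad L_1(\lambda)=\frac1n\Big(\beta_1-\operatorname{sgn}(z_1)(|z_1|-\lambda)_+\Big)^2,$$ with $L_p(\lambda_p^* )=\min_{\lambda\ge0}L_p(\lambda)$ and $L_1(\lambda_1^* )=\min_{\lambda\ge0}L_1(\lambda)$. Assume $\operatorname{sgn}(\beta_1)=\operatorname{sgn}(z_1)$ and $\max_{2\le j\le p}|z_j|>|z_1|$. Then $L_p(\lambda_p^* )>L_1(\lambda_1^* )$.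
   Context: $(a)_+=\max(a,0)$; $\operatorname{sgn}$ is the sign function. In the paper's setting $\mathbf z=\mathbf X^T\mathbf y$ for an orthonormal design with $\mathbf y=\mathbf X\boldsymbol\beta_0+\boldsymbol\varepsilon$, $\boldsymbol\beta_0=(\beta_1,0,\dots,0)^T$; $L_p$ and $L_1$ are the Lasso losses using all $p$ predictors and only the true predictor, respectively. *)

theory Defs
  imports Complex_Main
begin

definition pos_part :: "real \<Rightarrow> real" where
  "pos_part a = max a 0"

definition L_p :: "nat \<Rightarrow> nat \<Rightarrow> real \<Rightarrow> (nat \<Rightarrow> real) \<Rightarrow> real \<Rightarrow> real" where
  "L_p n p \<beta>1 z lam =
     (1 / real n) * (\<beta>1 - sgn (z 1) * pos_part (\<bar>z 1\<bar> - lam))^2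
     + (1 / real n) * (\<Sum>j=2..p. (pos_part (\<bar>z j\<bar> - lam))^2)"

definition L_1 :: "nat \<Rightarrow> real \<Rightarrow> (nat \<Rightarrow> real) \<Rightarrow> real \<Rightarrow> real" where
  "L_1 n \<beta>1 z lam = (1 / real n) * (\<beta>1 - sgn (z 1) * pos_part (\<bar>z 1\<bar> - lam))^2"

end

theory Submission
  imports Defs
begin

text \<open>Since sgn \<beta>1 = sgn z1, the first coordinate of the Lasso estimate is the soft-thresholded
  value (|z1| - \<lambda>)+ pointing in the direction of \<beta>1, so with a = |z1| and b = |\<beta>1| the loss of
  the one-predictor model is (b - (a - \<lambda>)+)^2/n; at \<lambda> = (a - b)+ it equals ((b - a)+)^2/n.
  For any \<lambda> \<ge> 0 the full model pays strictly more: if \<lambda> lies below M = max |zj| > a, the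
  spurious predictor j contributes a positive term and shrinking z1 by at most a costs at
  least ((b - a)+)^2; otherwise \<lambda> \<ge> M > a kills the true coefficient and the loss is b^2,
  which exceeds ((b - a)+)^2 because a > 0.\<close>

lemma pos_part_nonneg: "pos_part x \<ge> 0"
  by (simp add: pos_part_def)

lemma sq_diff_sgn_eq_abs:
  fixes b z c :: real
  assumes "sgn b = sgn z" and "b \<noteq> 0"
  shows "(b - sgn z * c)^2 = (\<bar>b\<bar> - c)^2"
proof (cases "b > 0")
  case True
  with assms have "sgn z = 1" by (simp add: sgn_if split: if_splits)
  with True show ?thesis by simp
next
  case False
  with assms have "b < 0" "sgn z = -1" by (auto simp: sgn_if split: if_splits)
  then show ?thesis by (simp add: power2_eq_square algebra_simps)
qed

lemma L_1_eq_abs: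
  assumes "sgn \<beta>1 = sgn (z 1)" and "\<beta>1 \<noteq> 0"
  shows "L_1 n \<beta>1 z lam = (\<bar>\<beta>1\<bar> - pos_part (\<bar>z 1\<bar> - lam))^2 / real n"
  unfolding L_1_def using sq_diff_sgn_eq_abs[OF assms] by simp

lemma L_1_at_soft_threshold:
  assumes "sgn \<beta>1 = sgn (z 1)" and "\<beta>1 \<noteq> 0"
  shows "L_1 n \<beta>1 z (pos_part (\<bar>z 1\<bar> - \<bar>\<beta>1\<bar>)) = (pos_part (\<bar>\<beta>1\<bar> - \<bar>z 1\<bar>))^2 / real n"
  using L_1_eq_abs[of \<beta>1 z, OF assms] by (auto simp: pos_part_def max_def)

lemma L_p_eq_L_1_plus:
  "L_p n p \<beta>1 z lam = L_1 n \<beta>1 z lam + (\<Sum>j=2..p. (pos_part (\<bar>z j\<bar> - lam))^2) / real n"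
  unfolding L_p_def L_1_def by simp

lemma L_p_ge_L_1_plus_term:
  assumes "j \<in> {2..p}"
  shows "L_p n p \<beta>1 z lam \<ge> L_1 n \<beta>1 z lam + (pos_part (\<bar>z j\<bar> - lam))^2 / real n"
proof -
  have "(pos_part (\<bar>z j\<bar> - lam))^2 \<le> (\<Sum>i=2..p. (pos_part (\<bar>z i\<bar> - lam))^2)"
    using assms by (intro member_le_sum) auto
  then show ?thesis
    unfolding L_p_eq_L_1_plus by (simp add: divide_right_mono)
qed

lemma soft_threshold_loss_gt:
  fixes a b m lam :: real
  assumes "0 < a" and "a < m" and "0 < b" and "0 \<le> lam"
  shows "(b - pos_part (a - lam))^2 + (pos_part (m - lam))^2 > (pos_part (b - a))^2"
proof (cases "lam < m")
  case True
  have "(pos_part (m - lam))^2 > 0" using True by (simp add: pos_part_def)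
  moreover have "(b - pos_part (a - lam))^2 \<ge> (pos_part (b - a))^2"
  proof (cases "a \<le> b")
    case True
    have "pos_part (a - lam) \<le> a" using assms by (simp add: pos_part_def)
    with True show ?thesis by (simp add: pos_part_def power_mono)
  qed (simp add: pos_part_def)
  ultimately show ?thesis by linarith
next
  case False
  with assms have "(b - pos_part (a - lam))^2 = b^2" by (simp add: pos_part_def)
  moreover have "(pos_part (b - a))^2 < b^2"
    using assms by (auto simp: pos_part_def max_def intro!: power_strict_mono)
  moreover have "(pos_part (m - lam))^2 \<ge> 0" by simp
  ultimately show ?thesis by linarith
qed

theorem lemma2p4:
  fixes n p :: nat and \<beta>1 :: real and z :: "nat \<Rightarrow> real" and lp l1 :: real
  assumes "2 \<le> p" and "p \<le> n"
    and "\<beta>1 \<noteq> 0"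
    and "lp \<ge> 0" and "\<forall>lam\<ge>0. L_p n p \<beta>1 z lp \<le> L_p n p \<beta>1 z lam"
    and "l1 \<ge> 0" and "\<forall>lam\<ge>0. L_1 n \<beta>1 z l1 \<le> L_1 n \<beta>1 z lam"
    and "sgn \<beta>1 = sgn (z 1)"
    and "Max ((\<lambda>j. \<bar>z j\<bar>) ` {2..p}) > \<bar>z 1\<bar>"
  shows "L_p n p \<beta>1 z lp > L_1 n \<beta>1 z l1"
proof -
  have n_pos: "real n > 0" using assms(1,2) by simp
  have z1_pos: "\<bar>z 1\<bar> > 0" using assms(3,8) by (auto simp: sgn_if split: if_splits)
  have "Max ((\<lambda>j. \<bar>z j\<bar>) ` {2..p}) \<in> (\<lambda>j. \<bar>z j\<bar>) ` {2..p}"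
    using assms(1) by (intro Max_in) auto
  then obtain j where j: "j \<in> {2..p}" "\<bar>z j\<bar> > \<bar>z 1\<bar>"
    using assms(9) by auto
  have "L_1 n \<beta>1 z l1 \<le> (pos_part (\<bar>\<beta>1\<bar> - \<bar>z 1\<bar>))^2 / real n"
    using assms(7) pos_part_nonneg L_1_at_soft_threshold[of \<beta>1 z, OF assms(8,3)] by metis
  also have "\<dots> < ((\<bar>\<beta>1\<bar> - pos_part (\<bar>z 1\<bar> - lp))^2 + (pos_part (\<bar>z j\<bar> - lp))^2) / real n"
    using soft_threshold_loss_gt[OF z1_pos j(2) _ assms(4)] assms(3) n_pos
    by (simp add: divide_strict_right_mono)
  also have "\<dots> = L_1 n \<beta>1 z lp + (pos_part (\<bar>z j\<bar> - lp))^2 / real n"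
    by (simp add: L_1_eq_abs[of \<beta>1 z, OF assms(8,3)] add_divide_distrib)
  also have "\<dots> \<le> L_p n p \<beta>1 z lp"
    using L_p_ge_L_1_plus_term[OF j(1)] .
  finally show ?thesis .
qed

end
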